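(* Let $G\leq\operatorname{Homeo}(\mathfrak{C})$ be vigorous and let $A\in K_{\mathfrak{C}}$. Then a free group of rank $2$ embeds in $\operatorname{pstab}_G(A)$.
   Context: $\mathfrak{C}$ denotes a Cantor space (a space homeomorphic to $\{0,1\}^\omega$). Groups of homeomorphisms act on the right. $K_{\mathfrak{C}}$ denotes the set of non-empty proper clopen subsets of $\mathfrak{C}$. For $\gamma\in\operatorname{Homeo}(\mathfrak{C})$, $\operatorname{supp}(\gamma)=\{p\in\mathfrak{C}: p\gamma\neq p\}$. For $G\le\operatorname{Homeo}(\mathfrak{C})$ and $A\subseteq\mathfrak{C}$, $\operatorname{pstab}_G(A)=\{g\in G: pg=p \text{ for all } p\in A\}$. A subset $S\subseteq \operatorname{Homeo}(\mathfrak{C})$ is vigorous if for all clopen $A,B,C\subseteq\mathfrak{C}$ with $B,C$ non-empty proper subsets of $A$ there is $\gamma\in S$ with $\operatorname{supp}(\gamma)\subseteq A$ and $B\gamma\subseteq C$. *)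

theory Defs
  imports "HOL-Analysis.Analysis"
begin

definition cantor :: "(nat \<Rightarrow> bool) topology" where
  "cantor = product_topology (\<lambda>_. discrete_topology UNIV) UNIV"

type_synonym cpt = "nat \<Rightarrow> bool"
type_synonym cpt_map = "cpt \<Rightarrow> cpt"

definition is_homeo :: "(cpt \<Rightarrow> cpt) \<Rightarrow> bool" where
  "is_homeo g \<longleftrightarrow> homeomorphic_map cantor cantor g"

text \<open>A subgroup of Homeo(C). Groups act on the right: \<open>p(gh) = (p g) h\<close>,
  i.e. the product \<open>gh\<close> is the function \<open>h \<circ> g\<close>.\<close>
definition homeo_group :: "(cpt \<Rightarrow> cpt) set \<Rightarrow> bool" where
  "homeo_group G \<longleftrightarrow> (\<forall>g\<in>G. is_homeo g) \<and> id \<in> G \<and>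
     (\<forall>g\<in>G. \<forall>h\<in>G. h \<circ> g \<in> G) \<and> (\<forall>g\<in>G. inv g \<in> G)"

definition clopen_C :: "cpt set \<Rightarrow> bool" where
  "clopen_C A \<longleftrightarrow> openin cantor A \<and> closedin cantor A"

definition K_C :: "cpt set set" where
  "K_C = {A. clopen_C A \<and> A \<noteq> {} \<and> A \<noteq> topspace cantor}"

definition supp :: "(cpt \<Rightarrow> cpt) \<Rightarrow> cpt set" where
  "supp g = {p. g p \<noteq> p}"

definition pstab :: "(cpt \<Rightarrow> cpt) set \<Rightarrow> cpt set \<Rightarrow> (cpt \<Rightarrow> cpt) set" where
  "pstab G A = {g \<in> G. \<forall>p\<in>A. g p = p}"

definition vigorous :: "(cpt \<Rightarrow> cpt) set \<Rightarrow> bool" where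
  "vigorous S \<longleftrightarrow> (\<forall>A B C. clopen_C A \<and> clopen_C B \<and> clopen_C C \<and>
      B \<noteq> {} \<and> B \<subset> A \<and> C \<noteq> {} \<and> C \<subset> A \<longrightarrow>
      (\<exists>\<gamma>\<in>S. supp \<gamma> \<subseteq> A \<and> \<gamma> ` B \<subseteq> C))"

text \<open>Words in two letters: a letter is (generator, inverted?), generator True = a,
  False = b. A word is reduced if no letter is adjacent to its inverse.\<close>
fun reduced_word :: "(bool \<times> bool) list \<Rightarrow> bool" where
  "reduced_word (x # y # w) \<longleftrightarrow> \<not> (fst x = fst y \<and> snd x \<noteq> snd y) \<and> reduced_word (y # w)"
| "reduced_word _ \<longleftrightarrow> True"

definition letter_val :: "cpt_map \<Rightarrow> cpt_map \<Rightarrow> bool \<times> bool \<Rightarrow> cpt_map" where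
  "letter_val a b x = (let g = (if fst x then a else b) in if snd x then inv g else g)"

text \<open>Evaluation of a word with right action: the first letter acts first.\<close>
fun word_val :: "cpt_map \<Rightarrow> cpt_map \<Rightarrow> (bool \<times> bool) list \<Rightarrow> cpt_map" where
  "word_val a b [] = id"
| "word_val a b (x # w) = word_val a b w \<circ> letter_val a b x"

definition free_pair :: "cpt_map \<Rightarrow> cpt_map \<Rightarrow> bool" where
  "free_pair a b \<longleftrightarrow> (\<forall>w. reduced_word w \<and> w \<noteq> [] \<longrightarrow> word_val a b w \<noteq> id)"

end

theory Submission
  imports Defs
begin

text \<open>Ping-pong. Inside the complement \<open>D\<close> of \<open>A\<close> choose four disjoint clopen sets
  \<open>Q(a), Q(a\<inverse>), Q(b), Q(b\<inverse>)\<close> and a point \<open>p \<in> D\<close> outside all of them. Vigour yields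
  \<open>a, b \<in> G\<close> supported in \<open>D\<close> (hence fixing \<open>A\<close>) such that \<open>a\<close> maps \<open>D - Q(a\<inverse>)\<close> into
  \<open>Q(a)\<close>, and likewise for \<open>b\<close>; then \<open>a\<inverse>\<close> maps \<open>D - Q(a)\<close> into \<open>Q(a\<inverse>)\<close>. A reduced
  word \<open>w\<close> moves \<open>p\<close> into the piece of its last letter, so \<open>w \<noteq> 1\<close>.\<close>

lemma topspace_cantor [simp]: "topspace cantor = UNIV"
  by (auto simp: cantor_def PiE_def extensional_def)

lemma clopen_C_Compl: "clopen_C D \<Longrightarrow> clopen_C (- D)"
  unfolding clopen_C_def
  by (metis Compl_eq_Diff_UNIV closedin_def openin_closedin_eq topspace_cantor)

lemma clopen_C_Diff: "clopen_C D \<Longrightarrow> clopen_C P \<Longrightarrow> clopen_C (D - P)"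
  by (simp add: clopen_C_def openin_diff closedin_diff)

definition cylinder :: "cpt \<Rightarrow> nat set \<Rightarrow> cpt set" where
  "cylinder c F = {q. \<forall>i\<in>F. q i = c i}"

lemma clopen_C_coordinate: "clopen_C {q. q i = v}"
proof -
  have proj: "continuous_map cantor (discrete_topology UNIV) (\<lambda>x. x i)"
    unfolding cantor_def by (rule continuous_map_product_projection) simp
  have "openin cantor {x \<in> topspace cantor. x i \<in> {v}}"
    by (rule openin_continuous_map_preimage[OF proj]) simp
  moreover have "closedin cantor {x \<in> topspace cantor. x i \<in> {v}}"
    by (rule closedin_continuous_map_preimage[OF proj]) simp
  ultimately show ?thesis by (simp add: clopen_C_def)
qed

lemma clopen_C_cylinder: "finite F \<Longrightarrow> clopen_C (cylinder c F)"
proof (induction F rule: finite_induct)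
  case empty
  then show ?case
    by (simp add: cylinder_def clopen_C_def) (metis closedin_topspace openin_topspace topspace_cantor)
next
  case (insert x F)
  have "cylinder c (insert x F) = {q. q x = c x} \<inter> cylinder c F"
    by (auto simp: cylinder_def)
  then show ?case using insert clopen_C_coordinate[of x "c x"]
    by (simp add: clopen_C_def openin_Int closedin_Int)
qed

lemma openin_cantor_contains_cylinder:
  assumes "openin cantor D" and "p \<in> D"
  obtains n where "cylinder p {..<n} \<subseteq> D"
proof -
  obtain U where U: "finite {i. U i \<noteq> UNIV}" "p \<in> Pi\<^sub>E UNIV U" "Pi\<^sub>E UNIV U \<subseteq> D"
    using assms unfolding cantor_def openin_product_topology_alt by fastforce
  obtain n where n: "\<And>i. U i \<noteq> UNIV \<Longrightarrow> i < n"
    using finite_nat_bounded[OF U(1)] by auto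
  have "cylinder p {..<n} \<subseteq> Pi\<^sub>E UNIV U"
  proof
    fix q assume q: "q \<in> cylinder p {..<n}"
    have "q i \<in> U i" for i
    proof (cases "U i = UNIV")
      case False
      then show ?thesis using n q U(2) by (auto simp: cylinder_def PiE_def)
    qed simp
    then show "q \<in> Pi\<^sub>E UNIV U" by (simp add: PiE_def extensional_def)
  qed
  with U(3) show thesis using that by (meson order_trans)
qed

text \<open>The pieces are the cylinders fixing \<open>p\<close> below \<open>n\<close>, the index in coordinates \<open>n\<close>
  and \<open>n + 1\<close>, and the marker \<open>True\<close> in coordinate \<open>n + 2\<close>; the point outside them carries
  the marker \<open>False\<close>.\<close>

lemma clopen_C_disjoint_pieces:
  assumes "clopen_C D" and "D \<noteq> {}"
  obtains Q :: "bool \<times> bool \<Rightarrow> cpt set" and p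
  where "\<And>x. clopen_C (Q x)" "\<And>x. Q x \<noteq> {}" "\<And>x. Q x \<subseteq> D"
    and "\<And>x y. x \<noteq> y \<Longrightarrow> Q x \<inter> Q y = {}"
    and "p \<in> D" "\<And>x. p \<notin> Q x"
proof -
  obtain p0 where "p0 \<in> D" using assms(2) by blast
  then obtain n where cyl: "cylinder p0 {..<n} \<subseteq> D"
    using assms(1) openin_cantor_contains_cylinder by (auto simp: clopen_C_def)
  define c where "c x = p0(n := fst x, Suc n := snd x, Suc (Suc n) := True)" for x :: "bool \<times> bool"
  define Q where "Q x = cylinder (c x) {..<Suc (Suc (Suc n))}" for x
  define p where "p = p0(Suc (Suc n) := False)"
  have Q_iff: "q \<in> Q x \<longleftrightarrow> (\<forall>i<n. q i = p0 i) \<and> q n = fst x \<and> q (Suc n) = snd x \<and> q (Suc (Suc n))"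
    for q x
    unfolding Q_def cylinder_def lessThan_Suc by (auto simp: c_def)
  show thesis
  proof (rule that)
    show "clopen_C (Q x)" for x
      by (simp add: Q_def clopen_C_cylinder)
    show "Q x \<noteq> {}" for x
      by (auto simp: Q_def cylinder_def)
    show "Q x \<subseteq> D" for x
      using cyl by (auto simp: Q_iff cylinder_def)
    show "Q x \<inter> Q y = {}" if "x \<noteq> y" for x y
      using that by (auto simp: Q_iff prod_eq_iff)
    show "p \<in> D"
      using cyl by (auto simp: p_def cylinder_def)
    show "p \<notin> Q x" for x
      by (simp add: Q_iff p_def)
  qed
qed

lemma vigorous_ping:
  assumes "vigorous G" and "clopen_C D" and "clopen_C P" and "clopen_C Q"
    and "P \<noteq> {}" and "Q \<noteq> {}" and "P \<subseteq> D" and "Q \<subseteq> D" and "P \<inter> Q = {}"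
  shows "\<exists>g\<in>G. supp g \<subseteq> D \<and> g ` (D - P) \<subseteq> Q"
proof -
  have "clopen_C (D - P)" "D - P \<noteq> {}" "D - P \<subset> D" "Q \<subset> D"
    using assms clopen_C_Diff by auto
  then show ?thesis
    using assms(1)[unfolded vigorous_def, rule_format, of D "D - P" Q] assms(2,4,6) by simp
qed

text \<open>A point of \<open>D - Q\<close> cannot come from \<open>D - P\<close> (that lands in \<open>Q\<close>) nor from outside \<open>D\<close>
  (fixed by \<open>g\<close>), so its preimage lies in \<open>P\<close>.\<close>

lemma inv_ping_pong:
  assumes "bij g" and "supp g \<subseteq> D" and "g ` (D - P) \<subseteq> Q"
  shows "inv g ` (D - Q) \<subseteq> P"
proof
  fix r assume "r \<in> inv g ` (D - Q)"
  then obtain q where q: "q \<in> D" "q \<notin> Q" and r: "r = inv g q" by blast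
  have gr: "g r = q" using assms(1) r by (simp add: bij_is_surj surj_f_inv_f)
  show "r \<in> P"
  proof (rule ccontr)
    assume "r \<notin> P"
    show False
    proof (cases "r \<in> D")
      case True
      then show False using gr q \<open>r \<notin> P\<close> assms(3) by blast
    next
      case False
      then have "g r = r" using assms(2) by (auto simp: supp_def)
      then show False using gr q False by simp
    qed
  qed
qed

definition inverse_letter :: "bool \<times> bool \<Rightarrow> bool \<times> bool" where
  "inverse_letter x = (fst x, \<not> snd x)"

lemma ping_pong_word:
  assumes letter: "\<And>x. letter_val a b x ` (D - Q (inverse_letter x)) \<subseteq> Q x"
    and pieces: "\<And>x. Q x \<subseteq> D"
    and disjoint: "\<And>x y. x \<noteq> y \<Longrightarrow> Q x \<inter> Q y = {}"
  shows "reduced_word (x # w) \<Longrightarrow> q \<in> D - Q (inverse_letter x)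
     \<Longrightarrow> word_val a b (x # w) q \<in> Q (last (x # w))"
proof (induction w arbitrary: x q)
  case Nil
  have "letter_val a b x q \<in> Q x" using letter[of x] Nil.prems(2) by blast
  then show ?case by simp
next
  case (Cons y w)
  have moved: "letter_val a b x q \<in> Q x" using letter Cons.prems(2) by blast
  have "x \<noteq> inverse_letter y"
    using Cons.prems(1) by (cases x; cases y) (auto simp: inverse_letter_def)
  then have "letter_val a b x q \<in> D - Q (inverse_letter y)"
    using moved disjoint pieces by blast
  moreover have "reduced_word (y # w)" using Cons.prems(1) by simp
  ultimately show ?case using Cons.IH by simp
qed

lemma free_pair_ping_pong:
  assumes "\<And>x. letter_val a b x ` (D - Q (inverse_letter x)) \<subseteq> Q x"
    and "\<And>x. Q x \<subseteq> D" and "\<And>x y. x \<noteq> y \<Longrightarrow> Q x \<inter> Q y = {}"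
    and "p \<in> D" and "\<And>x. p \<notin> Q x"
  shows "free_pair a b"
  unfolding free_pair_def
proof (intro allI impI)
  fix w :: "(bool \<times> bool) list" assume w: "reduced_word w \<and> w \<noteq> []"
  then obtain x w' where xw: "w = x # w'" by (cases w) auto
  have "word_val a b w p \<in> Q (last w)"
    using ping_pong_word[OF assms(1-3)] w xw assms(4,5) by blast
  then show "word_val a b w \<noteq> id" using assms(5)[of "last w"] by (metis id_apply)
qed

lemma homeo_group_bij: "homeo_group G \<Longrightarrow> g \<in> G \<Longrightarrow> bij g"
  unfolding homeo_group_def is_homeo_def bij_def
  using homeomorphic_imp_injective_map homeomorphic_imp_surjective_map by fastforce

lemma pstab_if_supp_subset: "g \<in> G \<Longrightarrow> supp g \<subseteq> - A \<Longrightarrow> g \<in> pstab G A"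
  by (auto simp: pstab_def supp_def)

theorem theorem2p2:
  assumes "homeo_group G" and "vigorous G" and "A \<in> K_C"
  shows "\<exists>a b. a \<in> pstab G A \<and> b \<in> pstab G A \<and> free_pair a b"
proof -
  have D: "clopen_C (- A)" "- A \<noteq> {}"
    using assms(3) clopen_C_Compl by (auto simp: K_C_def)
  obtain Q :: "bool \<times> bool \<Rightarrow> cpt set" and p
    where Q: "\<And>x. clopen_C (Q x)" "\<And>x. Q x \<noteq> {}" "\<And>x. Q x \<subseteq> - A"
    "\<And>x y. x \<noteq> y \<Longrightarrow> Q x \<inter> Q y = {}" and p: "p \<in> - A" "\<And>x. p \<notin> Q x"
    using clopen_C_disjoint_pieces[OF D] by metis
  have ping: "\<exists>g\<in>G. supp g \<subseteq> - A \<and> g ` (- A - Q (v, True)) \<subseteq> Q (v, False)" for v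
    by (rule vigorous_ping[OF assms(2) D(1) Q(1) Q(1) Q(2) Q(2) Q(3) Q(3) Q(4)]) simp
  obtain a where a: "a \<in> G" "supp a \<subseteq> - A" "a ` (- A - Q (True, True)) \<subseteq> Q (True, False)"
    using ping by blast
  obtain b where b: "b \<in> G" "supp b \<subseteq> - A" "b ` (- A - Q (False, True)) \<subseteq> Q (False, False)"
    using ping by blast
  have "inv a ` (- A - Q (True, False)) \<subseteq> Q (True, True)"
    by (rule inv_ping_pong[OF homeo_group_bij[OF assms(1) a(1)] a(2,3)])
  moreover have "inv b ` (- A - Q (False, False)) \<subseteq> Q (False, True)"
    by (rule inv_ping_pong[OF homeo_group_bij[OF assms(1) b(1)] b(2,3)])
  ultimately have "letter_val a b x ` (- A - Q (inverse_letter x)) \<subseteq> Q x" for x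
    using a(3) b(3) by (cases x) (auto simp: letter_val_def inverse_letter_def)
  then have "free_pair a b"
    by (rule free_pair_ping_pong[OF _ Q(3,4) p])
  then show ?thesis
    using pstab_if_supp_subset a(1,2) b(1,2) by blast
qed

end
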